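(* Let $n\ge2$ and let $f:\{0,1\}^{n-1}\to\{0,1\}$ be a monotone Boolean function (i.e. $x\le y$ coordinatewise implies $f(x)\le f(y)$). Define the orientation $\Phi_f$ of the $n$-cube by: for $i\ne n$, $v\to v\oplus i$ iff $v_i=0$; and $v\to v\oplus n$ iff $v_n+f(v')=1$, where $v'\in\{0,1\}^{n-1}$ consists of the first $n-1$ coordinates of $v$. Then $\Phi_f$ is an acyclic, locally uniform, strongly Holt--Klee unique-sink orientation, and distinct monotone functions $f$ give distinct orientations $\Phi_f$.
   Context: For $v\in\{0,1\}^n$ and $I\subseteq[n]$, $v\oplus I$ is obtained from $v$ by flipping the coordinates in $I$; $v\oplus i:=v\oplus\{i\}$. The $n$-cube has vertex set $\{0,1\}^n$ and edges $\{v,v\oplus i\}$. A subcube is the induced subgraph on a vertex set $\{v\oplus I: I\subseteq C\}$ for some vertex $v$ and $C\subseteq[n]$; its dimension is $|C|$. A unique-sink orientation (USO) is an orientation of the $n$-cube in which every subcube has exactly one sink; then every subcube also has a unique source. For an orientation $\Phi$ and $F\subseteq[n]$, $\Phi^{(F)}$ is obtained by reversing all edges $\{v,v\oplus i\}$ with $i\in F$. A USO is Holt--Klee if in every subcube of dimension $d$ there are $d$ directed paths from the subcube's source to its sink, pairwise sharing no vertex other than source and sink. A USO $\Phi$ is strongly Holt--Klee if $\Phi^{(F)}$ is Holt--Klee for every $F\subseteq[n]$. A USO is locally uniform if (i) whenever $u_i=u_j=0$, $u\to u\oplus i$ and $u\to u\oplus j$, then $u\oplus i\to u\oplus\{i,j\}$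 and $u\oplus j\to u\oplus\{i,j\}$; and (ii) whenever $u_i=u_j=0$, $u\oplus i\to u$ and $u\oplus j\to u$, then $u\oplus\{i,j\}\to u\oplus i$ and $u\oplus\{i,j\}\to u\oplus j$. Acyclic means no directed cycle. *)

theory Defs
  imports Main
begin

text \<open>Vertices of the n-cube {0,1}^n are encoded as subsets v of {1..n}:
  coordinate i of v is 1 iff i \<in> v. An orientation is a relation Ori on
  vertices: Ori v w means the directed edge v \<rightarrow> w.\<close>

definition flipset :: "nat set \<Rightarrow> nat set \<Rightarrow> nat set" where
  "flipset v I = (v - I) \<union> (I - v)"

definition flip :: "nat set \<Rightarrow> nat \<Rightarrow> nat set" where
  "flip v i = flipset v {i}"

definition is_orientation :: "nat \<Rightarrow> (nat set \<Rightarrow> nat set \<Rightarrow> bool) \<Rightarrow> bool" where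
  "is_orientation n Ori \<longleftrightarrow>
     (\<forall>v w. Ori v w \<longrightarrow> v \<subseteq> {1..n} \<and> (\<exists>i\<in>{1..n}. w = flip v i)) \<and>
     (\<forall>v. v \<subseteq> {1..n} \<longrightarrow> (\<forall>i\<in>{1..n}. Ori v (flip v i) \<noteq> Ori (flip v i) v))"

definition subcube :: "nat set \<Rightarrow> nat set \<Rightarrow> nat set set" where
  "subcube v C = {flipset v I | I. I \<subseteq> C}"

definition is_sink_in :: "(nat set \<Rightarrow> nat set \<Rightarrow> bool) \<Rightarrow> nat set \<Rightarrow> nat set \<Rightarrow> nat set \<Rightarrow> bool" where
  "is_sink_in Ori v C u \<longleftrightarrow> u \<in> subcube v C \<and> (\<forall>i\<in>C. \<not> Ori u (flip u i))"

definition is_source_in :: "(nat set \<Rightarrow> nat set \<Rightarrow> bool) \<Rightarrow> nat set \<Rightarrow> nat set \<Rightarrow> nat set \<Rightarrow> bool" where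
  "is_source_in Ori v C u \<longleftrightarrow> u \<in> subcube v C \<and> (\<forall>i\<in>C. \<not> Ori (flip u i) u)"

definition USO :: "nat \<Rightarrow> (nat set \<Rightarrow> nat set \<Rightarrow> bool) \<Rightarrow> bool" where
  "USO n Ori \<longleftrightarrow> is_orientation n Ori \<and>
     (\<forall>v C. v \<subseteq> {1..n} \<longrightarrow> C \<subseteq> {1..n} \<longrightarrow> (\<exists>!u. is_sink_in Ori v C u))"

definition reorient :: "nat set \<Rightarrow> (nat set \<Rightarrow> nat set \<Rightarrow> bool) \<Rightarrow> (nat set \<Rightarrow> nat set \<Rightarrow> bool)" where
  "reorient F Ori v w = (if (\<exists>i\<in>F. w = flip v i) then Ori w v else Ori v w)"

definition dipath_in :: "(nat set \<Rightarrow> nat set \<Rightarrow> bool) \<Rightarrow> nat set set \<Rightarrow> nat set list \<Rightarrow> nat set \<Rightarrow> nat set \<Rightarrow> bool" where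
  "dipath_in Ori S p s t \<longleftrightarrow> p \<noteq> [] \<and> hd p = s \<and> last p = t \<and> distinct p \<and> set p \<subseteq> S \<and>
     (\<forall>k. Suc k < length p \<longrightarrow> Ori (p ! k) (p ! Suc k))"

definition holt_klee :: "nat \<Rightarrow> (nat set \<Rightarrow> nat set \<Rightarrow> bool) \<Rightarrow> bool" where
  "holt_klee n Ori \<longleftrightarrow>
     (\<forall>v C s t. v \<subseteq> {1..n} \<longrightarrow> C \<subseteq> {1..n} \<longrightarrow> is_source_in Ori v C s \<longrightarrow> is_sink_in Ori v C t \<longrightarrow>
        (\<exists>P :: nat \<Rightarrow> nat set list. inj_on P {..<card C} \<and>
           (\<forall>k<card C. dipath_in Ori (subcube v C) (P k) s t) \<and>
           (\<forall>k<card C. \<forall>l<card C. k \<noteq> l \<longrightarrow> (set (P k) \<inter> set (P l)) \<subseteq> {s, t})))"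

definition strongly_holt_klee :: "nat \<Rightarrow> (nat set \<Rightarrow> nat set \<Rightarrow> bool) \<Rightarrow> bool" where
  "strongly_holt_klee n Ori \<longleftrightarrow> (\<forall>F. F \<subseteq> {1..n} \<longrightarrow> holt_klee n (reorient F Ori))"

definition locally_uniform :: "nat \<Rightarrow> (nat set \<Rightarrow> nat set \<Rightarrow> bool) \<Rightarrow> bool" where
  "locally_uniform n Ori \<longleftrightarrow>
     (\<forall>u i j. u \<subseteq> {1..n} \<longrightarrow> i \<in> {1..n} \<longrightarrow> j \<in> {1..n} \<longrightarrow> i \<noteq> j \<longrightarrow> i \<notin> u \<longrightarrow> j \<notin> u \<longrightarrow>
        ((Ori u (flip u i) \<and> Ori u (flip u j)) \<longrightarrow>
            (Ori (flip u i) (flipset u {i, j}) \<and> Ori (flip u j) (flipset u {i, j}))) \<and>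
        ((Ori (flip u i) u \<and> Ori (flip u j) u) \<longrightarrow>
            (Ori (flipset u {i, j}) (flip u i) \<and> Ori (flipset u {i, j}) (flip u j))))"

definition acyclic_orientation :: "(nat set \<Rightarrow> nat set \<Rightarrow> bool) \<Rightarrow> bool" where
  "acyclic_orientation Ori \<longleftrightarrow> acyclic {(v, w). Ori v w}"

definition monotone_bool :: "nat \<Rightarrow> (nat set \<Rightarrow> bool) \<Rightarrow> bool" where
  "monotone_bool m f \<longleftrightarrow> (\<forall>x y. x \<subseteq> y \<longrightarrow> y \<subseteq> {1..m} \<longrightarrow> f x \<longrightarrow> f y)"

definition Phi :: "nat \<Rightarrow> (nat set \<Rightarrow> bool) \<Rightarrow> nat set \<Rightarrow> nat set \<Rightarrow> bool" where
  "Phi n f v w \<longleftrightarrow> v \<subseteq> {1..n} \<and>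
     ((\<exists>i\<in>{1..n-1}. w = flip v i \<and> i \<notin> v) \<or>
      (w = flip v n \<and> ((n \<in> v) \<noteq> f (v - {n}))))"

end

theory Submission
  imports Defs
begin

(* Write Q = reorient F (Phi n f).  Along a direction i < n an edge of Q leaves u iff
   (i \<in> u) = (i \<in> F); along direction n it leaves u iff (n \<in> u) differs from
   fF (u - {n}) = f (u - {n}) xor (n \<in> F)  (lemma reorient_Phi_edge).  Everything follows
   from this description:
   - USO: the sink of a subcube is found by fixing the coordinates below n first and then
     coordinate n; it is unique for the same reason;
   - acyclicity: the potential 2 |u - {n}| + [(n \<in> u) = f (u - {n})] increases along edges;
   - local uniformity: a case check, using monotonicity of f once;
   - Holt-Klee: in offsets X from the source s of a subcube (vertex flipset s X), all edges in
     directions i < n go from X to insert i X, so paths are chains of sets.  Cyclic rotations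
     of an ordering of C - {n} give disjoint chains (locale cyclic_chains); when n \<in> C they
     are rerouted through direction n, at levels where the n-edge points the right way, whose
     existence is where monotonicity of f enters (locale hk_subcube);
   - Phi n f determines f, by looking at the n-edges at vertices avoiding n. *)

section \<open>Flipping coordinates\<close>

lemma mem_flipset [simp]: "x \<in> flipset v I \<longleftrightarrow> (x \<in> v) \<noteq> (x \<in> I)"
  by (auto simp: flipset_def)

lemma mem_flip [simp]: "x \<in> flip v i \<longleftrightarrow> (x \<in> v) \<noteq> (x = i)"
  by (auto simp: flip_def)

lemma flipset_eq_iff: "flipset s X = flipset s Y \<longleftrightarrow> X = Y"
  by (auto simp: set_eq_iff)

lemma flip_inj: "flip u i = flip u j \<longleftrightarrow> i = j"
  by (auto simp: set_eq_iff)

lemma flip_flip [simp]: "flip (flip u i) i = u"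
  by (auto simp: set_eq_iff)

lemma flip_minus_same [simp]: "flip u i - {i} = u - {i}"
  by auto

lemma flipset_flipset [simp]: "flipset v (flipset v u) = u"
  by (auto simp: set_eq_iff)

lemma flipset_empty [simp]: "flipset s {} = s"
  by (auto simp: set_eq_iff)

lemma flip_subset: "u \<subseteq> {1..n} \<Longrightarrow> i \<in> {1..n} \<Longrightarrow> flip u i \<subseteq> {1..n}"
  by auto

lemma subcube_iff: "u \<in> subcube v C \<longleftrightarrow> flipset v u \<subseteq> C"
proof
  assume "u \<in> subcube v C"
  then show "flipset v u \<subseteq> C" by (auto simp: subcube_def)
next
  assume "flipset v u \<subseteq> C"
  then show "u \<in> subcube v C"
    unfolding subcube_def by (intro CollectI exI[of _ "flipset v u"]) simp
qed

lemma subcube_vertex_bound: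
  "flipset v u \<subseteq> C \<Longrightarrow> v \<subseteq> {1..n} \<Longrightarrow> C \<subseteq> {1..n} \<Longrightarrow> u \<subseteq> {1..n}"
  by (auto simp: subset_iff)

lemma drop_last_coordinate: "Y \<subseteq> {1..n::nat} \<Longrightarrow> n \<notin> Y \<Longrightarrow> Y \<subseteq> {1..n - 1}"
proof
  fix x assume "Y \<subseteq> {1..n}" "n \<notin> Y" "x \<in> Y"
  then have "x \<in> {1..n}" "x \<noteq> n" by auto
  then show "x \<in> {1..n - 1}" by auto
qed

lemma monotone_flip_preserves:
  assumes mono: "monotone_bool m f" and Y: "Y \<subseteq> {1..m}" and x: "x \<in> {1..m}"
    and dir: "(x \<notin> Y) = f Y"
  shows "f (flip Y x) = f Y"
proof (cases "f Y")
  case True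
  then have "flip Y x = insert x Y" using dir by auto
  moreover have "Y \<subseteq> insert x Y" "insert x Y \<subseteq> {1..m}" using Y x by auto
  ultimately show ?thesis
    using mono[unfolded monotone_bool_def, rule_format, of Y "insert x Y"] True by simp
next
  case False
  then have "flip Y x = Y - {x}" using dir by auto
  moreover have "Y - {x} \<subseteq> Y" by auto
  ultimately show ?thesis
    using mono[unfolded monotone_bool_def, rule_format, of "Y - {x}" Y] False Y by auto
qed

section \<open>The edges of the reoriented orientation\<close>

lemma reorient_Phi_edge:
  assumes u: "u \<subseteq> {1..n}" and i: "i \<in> {1..n}" and n: "2 \<le> n"
  shows "reorient F (Phi n f) u (flip u i) \<longleftrightarrow>
     (if i = n then (n \<in> u) \<noteq> (f (u - {n}) \<noteq> (n \<in> F)) else (i \<in> u) = (i \<in> F))"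
proof -
  have rev: "(\<exists>j\<in>F. flip u i = flip u j) \<longleftrightarrow> i \<in> F" by (simp add: flip_inj)
  have flip_back: "\<And>j. u = flip (flip u i) j \<longleftrightarrow> j = i" by (metis flip_flip flip_inj)
  have fwd: "Phi n f u (flip u i) \<longleftrightarrow> (if i = n then (n \<in> u) \<noteq> f (u - {n}) else i \<notin> u)"
    using i n u unfolding Phi_def by (auto simp: flip_inj)
  have bwd: "Phi n f (flip u i) u \<longleftrightarrow> (if i = n then (n \<notin> u) \<noteq> f (u - {n}) else i \<in> u)"
  proof (cases "i = n")
    case True
    have "flip u n - {n} = u - {n}" by auto
    then show ?thesis unfolding Phi_def using True flip_subset[OF u i] n by (auto simp: flip_back)
  next
    case False
    then show ?thesis unfolding Phi_def using flip_subset[OF u i] i by (auto simp: flip_back)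
  qed
  show ?thesis unfolding reorient_def rev using fwd bwd by auto
qed

lemma reorient_empty [simp]: "reorient {} Ori = Ori"
  by (auto simp: reorient_def fun_eq_iff)

lemma Phi_edge:
  assumes "u \<subseteq> {1..n}" and "i \<in> {1..n}" and "2 \<le> n"
  shows "Phi n f u (flip u i) \<longleftrightarrow> (if i = n then (n \<in> u) \<noteq> f (u - {n}) else i \<notin> u)"
  using reorient_Phi_edge[OF assms, of "{}" f] by simp

lemma sink_reorient_Phi:
  assumes v: "v \<subseteq> {1..n}" and C: "C \<subseteq> {1..n}" and n: "2 \<le> n"
  shows "is_sink_in (reorient F (Phi n f)) v C u \<longleftrightarrow> flipset v u \<subseteq> C \<and>
    (\<forall>i\<in>C. if i = n then (n \<in> u) = (f (u - {n}) \<noteq> (n \<in> F)) else (i \<in> u) \<noteq> (i \<in> F))"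
proof -
  have "(\<forall>i\<in>C. \<not> reorient F (Phi n f) u (flip u i)) \<longleftrightarrow>
    (\<forall>i\<in>C. if i = n then (n \<in> u) = (f (u - {n}) \<noteq> (n \<in> F)) else (i \<in> u) \<noteq> (i \<in> F))"
    if "flipset v u \<subseteq> C"
  proof (rule ball_cong[OF refl])
    fix i assume "i \<in> C"
    then have "i \<in> {1..n}" using C by auto
    moreover have "u \<subseteq> {1..n}" using subcube_vertex_bound that v C by blast
    ultimately show "(\<not> reorient F (Phi n f) u (flip u i)) =
      (if i = n then (n \<in> u) = (f (u - {n}) \<noteq> (n \<in> F)) else (i \<in> u) \<noteq> (i \<in> F))"
      using reorient_Phi_edge[of u n i F f] n by (cases "i = n") auto
  qed
  then show ?thesis unfolding is_sink_in_def subcube_iff by blast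
qed

lemma source_reorient_Phi:
  assumes v: "v \<subseteq> {1..n}" and C: "C \<subseteq> {1..n}" and n: "2 \<le> n"
  shows "is_source_in (reorient F (Phi n f)) v C u \<longleftrightarrow> flipset v u \<subseteq> C \<and>
    (\<forall>i\<in>C. if i = n then (n \<in> u) \<noteq> (f (u - {n}) \<noteq> (n \<in> F)) else (i \<in> u) = (i \<in> F))"
proof -
  have "(\<forall>i\<in>C. \<not> reorient F (Phi n f) (flip u i) u) \<longleftrightarrow>
    (\<forall>i\<in>C. if i = n then (n \<in> u) \<noteq> (f (u - {n}) \<noteq> (n \<in> F)) else (i \<in> u) = (i \<in> F))"
    if "flipset v u \<subseteq> C"
  proof (rule ball_cong[OF refl])
    fix i assume "i \<in> C"
    then have i: "i \<in> {1..n}" using C by auto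
    have "u \<subseteq> {1..n}" using subcube_vertex_bound that v C by blast
    then have ui: "flip u i \<subseteq> {1..n}" using flip_subset i by blast
    have "flip u i - {n} = u - {n}" if "i = n" using that by auto
    then show "(\<not> reorient F (Phi n f) (flip u i) u) =
      (if i = n then (n \<in> u) \<noteq> (f (u - {n}) \<noteq> (n \<in> F)) else (i \<in> u) = (i \<in> F))"
      using reorient_Phi_edge[OF ui i n, of F f] by (cases "i = n") auto
  qed
  then show ?thesis unfolding is_source_in_def subcube_iff by blast
qed

section \<open>Unique sinks, acyclicity, local uniformity, injectivity\<close>

lemma is_orientation_Phi:
  assumes n: "2 \<le> n"
  shows "is_orientation n (Phi n f)"
proof -
  have "v \<subseteq> {1..n} \<and> (\<exists>i\<in>{1..n}. w = flip v i)" if "Phi n f v w" for v w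
    using that n unfolding Phi_def by fastforce
  moreover have "Phi n f v (flip v i) \<noteq> Phi n f (flip v i) v"
    if v: "v \<subseteq> {1..n}" and i: "i \<in> {1..n}" for v i
  proof -
    have "flip v i - {n} = v - {n}" if "i = n" using that by auto
    then show ?thesis
      using Phi_edge[OF v i n, of f] Phi_edge[OF flip_subset[OF v i] i n, of f]
      by (cases "i = n") auto
  qed
  ultimately show ?thesis unfolding is_orientation_def by blast
qed

text \<open>The sink of the subcube at v spanned by C: set all coordinates of C - {n} to 1,
  then choose coordinate n (if n \<in> C) to agree with f.\<close>
lemma USO_Phi:
  assumes n: "2 \<le> n"
  shows "USO n (Phi n f)"
  unfolding USO_def
proof (intro conjI allI impI is_orientation_Phi[OF n])
  fix v C assume v: "v \<subseteq> {1..n}" and C: "C \<subseteq> {1..n}"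
  have sink: "is_sink_in (Phi n f) v C u \<longleftrightarrow> flipset v u \<subseteq> C \<and>
    (\<forall>i\<in>C. if i = n then (n \<in> u) = f (u - {n}) else i \<in> u)" for u
    using sink_reorient_Phi[OF v C n, of "{}" f u] by simp
  define u1 where "u1 = v \<union> (C - {n})"
  define u where "u = (if n \<in> C \<and> (n \<in> u1) \<noteq> f (u1 - {n}) then flip u1 n else u1)"
  have "is_sink_in (Phi n f) v C u"
    unfolding sink
  proof
    show "flipset v u \<subseteq> C" unfolding u_def u1_def by auto
    have "u - {n} = u1 - {n}" unfolding u_def by auto
    then show "\<forall>i\<in>C. if i = n then (n \<in> u) = f (u - {n}) else i \<in> u"
      unfolding u_def u1_def by auto
  qed
  moreover have "w1 = w2" if "is_sink_in (Phi n f) v C w1" "is_sink_in (Phi n f) v C w2" for w1 w2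
  proof -
    have in_C: "\<forall>i\<in>C. if i = n then (n \<in> w1) = f (w1 - {n}) else i \<in> w1"
      "\<forall>i\<in>C. if i = n then (n \<in> w2) = f (w2 - {n}) else i \<in> w2"
      and out_C: "flipset v w1 \<subseteq> C" "flipset v w2 \<subseteq> C"
      using that sink by auto
    have below_n: "x \<in> w1 \<longleftrightarrow> x \<in> w2" if "x \<noteq> n" for x
    proof (cases "x \<in> C")
      case True
      then show ?thesis using in_C that by auto
    next
      case False
      then have "x \<notin> flipset v w1" "x \<notin> flipset v w2" using out_C by auto
      then show ?thesis by simp
    qed
    then have "w1 - {n} = w2 - {n}" by blast
    have "n \<in> w1 \<longleftrightarrow> n \<in> w2"
    proof (cases "n \<in> C")
      case True
      then show ?thesis using in_C \<open>w1 - {n} = w2 - {n}\<close> by force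
    next
      case False
      then have "n \<notin> flipset v w1" "n \<notin> flipset v w2" using out_C by auto
      then show ?thesis by simp
    qed
    show ?thesis
    proof (rule set_eqI)
      fix x
      show "x \<in> w1 \<longleftrightarrow> x \<in> w2"
        using below_n \<open>n \<in> w1 \<longleftrightarrow> n \<in> w2\<close> by (cases "x = n") auto
    qed
  qed
  ultimately show "\<exists>!u. is_sink_in (Phi n f) v C u" by blast
qed

text \<open>Every edge of Phi n f increases the potential
  2 |v - {n}| + [(n \<in> v) = f (v - {n})], so there are no directed cycles.\<close>
lemma acyclic_Phi: "acyclic_orientation (Phi n f)"
proof -
  define pot where "pot v = 2 * card (v - {n}) + (if (n \<in> v) = f (v - {n}) then 1 else 0)" for v
  have "pot v < pot w" if edge: "Phi n f v w" for v w
  proof -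
    have "v \<subseteq> {1..n}" using edge by (simp add: Phi_def)
    then have fin: "finite (v - {n})" using finite_subset by blast
    from edge consider i where "i \<in> {1..n - 1}" "w = flip v i" "i \<notin> v"
      | "w = flip v n" "(n \<in> v) \<noteq> f (v - {n})"
      unfolding Phi_def by auto
    then show ?thesis
    proof cases
      case (1 i)
      then have "w - {n} = insert i (v - {n})" "i \<notin> v - {n}" by auto
      then have "card (w - {n}) = Suc (card (v - {n}))" using fin by simp
      then show ?thesis unfolding pot_def by auto
    next
      case 2
      then have "w - {n} = v - {n}" by auto
      then show ?thesis unfolding pot_def using 2 by auto
    qed
  qed
  then have "{(v, w). Phi n f v w} \<subseteq> measure pot" by auto
  then have "wf {(v, w). Phi n f v w}" using wf_subset by blast
  then show ?thesis unfolding acyclic_orientation_def by (rule wf_acyclic)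
qed

text \<open>In a square spanned at u by two directions i, j with both edges leaving u, the edge
  from u \<oplus> i in direction j also points upwards; for j = n this is where monotonicity
  of f is used.\<close>
lemma Phi_square_out:
  assumes n: "2 \<le> n" and mono: "monotone_bool (n - 1) f"
    and u: "u \<subseteq> {1..n}" and i: "i \<in> {1..n}" and j: "j \<in> {1..n}" and ij: "i \<noteq> j"
    and iu: "i \<notin> u" and ju: "j \<notin> u" and out_j: "Phi n f u (flip u j)"
  shows "Phi n f (flip u i) (flip (flip u i) j)"
proof (cases "j = n")
  case True
  have "flip u i - {n} = insert i u" "u - {n} = u" using True ij iu ju by auto
  moreover have "f u" using out_j Phi_edge[OF u j n, of f] True ju \<open>u - {n} = u\<close> by simp
  moreover have "insert i u \<subseteq> {1..n - 1}"
    using drop_last_coordinate[of "insert i u" n] u i True ij ju by auto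
  moreover have "u \<subseteq> insert i u" by auto
  ultimately have "f (flip u i - {n})" using mono[unfolded monotone_bool_def] by auto
  then show ?thesis using Phi_edge[OF flip_subset[OF u i] j n, of f] True ij ju by simp
next
  case False
  then show ?thesis using Phi_edge[OF flip_subset[OF u i] j n, of f] ij ju by simp
qed

text \<open>Only direction n can point downwards, so no vertex has two incoming edges from
  vertices above it.\<close>
lemma Phi_no_two_down_edges:
  assumes n: "2 \<le> n" and u: "u \<subseteq> {1..n}" and i: "i \<in> {1..n}" and j: "j \<in> {1..n}"
    and ij: "i \<noteq> j" and iu: "i \<notin> u" and ju: "j \<notin> u"
  shows "\<not> (Phi n f (flip u i) u \<and> Phi n f (flip u j) u)"
  using Phi_edge[OF flip_subset[OF u i] i n, of f] Phi_edge[OF flip_subset[OF u j] j n, of f]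
    ij iu ju by auto

lemma locally_uniform_Phi:
  assumes n: "2 \<le> n" and mono: "monotone_bool (n - 1) f"
  shows "locally_uniform n (Phi n f)"
  unfolding locally_uniform_def
proof (intro allI impI conjI)
  fix u i j assume u: "u \<subseteq> {1..n}" and i: "i \<in> {1..n}" and j: "j \<in> {1..n}"
    and ij: "i \<noteq> j" and iu: "i \<notin> u" and ju: "j \<notin> u"
  have square: "flipset u {i, j} = flip (flip u i) j" "flipset u {i, j} = flip (flip u j) i"
    using ij by auto
  assume out: "Phi n f u (flip u i) \<and> Phi n f u (flip u j)"
  show "Phi n f (flip u i) (flipset u {i, j})"
    unfolding square(1) using Phi_square_out[OF n mono u i j ij iu ju] out by blast
  show "Phi n f (flip u j) (flipset u {i, j})"
    unfolding square(2) using Phi_square_out[OF n mono u j i ij[symmetric] ju iu] out by blast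
next
  fix u i j assume u: "u \<subseteq> {1..n}" and i: "i \<in> {1..n}" and j: "j \<in> {1..n}"
    and ij: "i \<noteq> j" and iu: "i \<notin> u" and ju: "j \<notin> u"
  assume "Phi n f (flip u i) u \<and> Phi n f (flip u j) u"
  then show "Phi n f (flipset u {i, j}) (flip u i)" "Phi n f (flipset u {i, j}) (flip u j)"
    using Phi_no_two_down_edges[OF n u i j ij iu ju] by blast+
qed

text \<open>Phi n f remembers f: at a vertex x \<subseteq> {1..n-1} the n-edge points up iff f x.\<close>
lemma Phi_determines_f:
  assumes n: "2 \<le> n" and x: "x \<subseteq> {1..n - 1}" and fg: "f x \<noteq> g x"
  shows "Phi n f \<noteq> Phi n g"
proof
  assume eq: "Phi n f = Phi n g"
  have xn: "x \<subseteq> {1..n}" "n \<notin> x" "x - {n} = x" using x n by (force simp: subset_iff)+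
  have "n \<in> {1..n}" using n by auto
  from Phi_edge[OF xn(1) this n, of f] Phi_edge[OF xn(1) this n, of g] eq xn fg
  show False by simp
qed

section \<open>Chains of sets built from cyclic rotations\<close>

lemma mod_add_cancel_nat:
  fixes a x y m :: nat
  assumes "x < m" "y < m" "(a + x) mod m = (a + y) mod m"
  shows "x = y"
proof -
  have "x = y" if "x \<le> y" "y < m" "(a + x) mod m = (a + y) mod m" for x y
  proof -
    have "m dvd y - x" using that mod_eq_dvd_iff_nat[of "a + x" "a + y" m] by simp
    moreover have "y - x < m" using that by simp
    ultimately have "y - x = 0" by (metis dvd_imp_le not_less neq0_conv)
    then show ?thesis using that by simp
  qed
  then show ?thesis using assms by (metis nat_le_linear)
qed

text \<open>The chains below are lists of the form map g [0..<k]; unfolding upt_Suc would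
  destroy that shape.\<close>
declare upt_Suc [simp del]

text \<open>Rotation r of
  xs yields the maximal chain of its initial segments ("arcs"); different rotations give chains
  sharing only the bottom and the top.  These chains, possibly lifted by inserting n from some
  level on, are the disjoint paths of the Holt-Klee property.\<close>
locale cyclic_chains =
  fixes xs :: "nat list" and n :: nat
  assumes distinct_xs: "distinct xs" and extra_notin: "n \<notin> set xs"
begin

abbreviation "m \<equiv> length xs"

definition arc :: "nat \<Rightarrow> nat \<Rightarrow> nat set" where "arc r k = set (take k (rotate r xs))"

lemma arc_0[simp]: "arc r 0 = {}" by (simp add: arc_def)

lemma finite_arc[simp]: "finite (arc r k)" by (simp add: arc_def)

lemma card_arc: "k \<le> m \<Longrightarrow> card (arc r k) = k"
  unfolding arc_def using distinct_xs by (simp add: distinct_card)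

lemma arc_full: "arc r m = set xs" by (simp add: arc_def)

lemma arc_subset: "arc r k \<subseteq> set xs"
  unfolding arc_def by (metis set_rotate set_take_subset)

lemma extra_notin_arc: "n \<notin> arc r k" using arc_subset extra_notin by blast

lemma arc_Suc: "k < m \<Longrightarrow> arc r (Suc k) = insert (rotate r xs ! k) (arc r k)"
  unfolding arc_def by (simp add: take_Suc_conv_app_nth)

lemma arc_next_notin: "k < m \<Longrightarrow> rotate r xs ! k \<notin> arc r k"
proof -
  assume k: "k < m"
  have "distinct (take (Suc k) (rotate r xs))" using distinct_xs by simp
  then show ?thesis unfolding arc_def using k by (simp add: take_Suc_conv_app_nth)
qed

lemma rotate_nth_in: "k < m \<Longrightarrow> rotate r xs ! k \<in> set xs"
  by (metis length_rotate nth_mem set_rotate)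

lemma arc_conv_mod: "k \<le> m \<Longrightarrow> arc r k = (\<lambda>j. xs ! ((r + j) mod m)) ` {0..<k}"
proof -
  assume k: "k \<le> m"
  have "arc r k = nth (rotate r xs) ` {0..<k}"
    unfolding arc_def using k by (simp add: nth_image)
  also have "\<dots> = (\<lambda>j. xs ! ((r + j) mod m)) ` {0..<k}"
    using k by (intro image_cong) (auto simp: nth_rotate)
  finally show ?thesis .
qed

lemma arc_determines_rotation:
  assumes r: "r < m" and r': "r' < m" and k0: "0 < k" and km: "k < m" and e: "arc r k = arc r' k"
  shows "r = r'"
proof (rule ccontr)
  assume ne: "r \<noteq> r'"
  have jc: "\<And>r. arc r k = (\<lambda>j. xs ! ((r + j) mod m)) ` {0..<k}" using arc_conv_mod km by simp
  have "xs ! r' \<in> arc r' k" unfolding jc using k0 r' by (intro image_eqI[of _ _ 0]) simp_all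
  then have "xs ! r' \<in> arc r k" using e by simp
  then obtain j where j: "j < k" and ej: "xs ! r' = xs ! ((r + j) mod m)" unfolding jc by auto
  have mpos: "0 < m" using r by linarith
  have rj: "r' = (r + j) mod m"
    using ej distinct_xs r' mpos by (simp add: nth_eq_iff_index_eq)
  have j0: "j \<noteq> 0"
  proof
    assume "j = 0" then show False using rj r ne by simp
  qed
  define q where "q = (r + k) mod m"
  have "xs ! q \<notin> arc r k"
  proof
    assume "xs ! q \<in> arc r k"
    then obtain j' where j': "j' < k" and ej': "xs ! q = xs ! ((r + j') mod m)" unfolding jc by auto
    then have "q = (r + j') mod m" using distinct_xs mpos unfolding q_def by (simp add: nth_eq_iff_index_eq)
    then have "k = j'" using mod_add_cancel_nat[of k m j' r] km j' unfolding q_def by simp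
    then show False using j' by simp
  qed
  moreover have "xs ! q \<in> arc r' k"
  proof -
    have "(r' + (k - j)) mod m = (r + j + (k - j)) mod m" unfolding rj by (simp add: mod_add_left_eq)
    also have "\<dots> = q" unfolding q_def using j by simp
    finally have "xs ! q = xs ! ((r' + (k - j)) mod m)" by simp
    moreover have "k - j < k" using j0 j by simp
    ultimately show ?thesis unfolding jc by (intro image_eqI[of _ _ "k - j"]) auto
  qed
  ultimately show False using e by simp
qed

lemma arc_1: "r < m \<Longrightarrow> arc r 1 = {xs ! r}"
proof -
  assume r: "r < m"
  then have "0 < m" by linarith
  then show ?thesis using arc_Suc[of 0 r] r by (simp add: nth_rotate)
qed

lemma arc_last:
  assumes "0 < r" "r < m"
  shows "arc r (m - 1) = set xs - {xs ! (r - 1)}"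
proof -
  have m1: "m - 1 < m" using assms by simp
  have a: "arc r m = insert (rotate r xs ! (m - 1)) (arc r (m - 1))"
  proof -
    have e: "Suc (m - 1) = m" using assms by linarith
    show ?thesis using arc_Suc[OF m1, of r] unfolding e .
  qed
  have b: "rotate r xs ! (m - 1) \<notin> arc r (m - 1)" using arc_next_notin[OF m1] .
  have c: "rotate r xs ! (m - 1) = xs ! (r - 1)"
  proof -
    have "r + (m - 1) = r - 1 + m" using assms by linarith
    then have "(r + (m - 1)) mod m = (r - 1 + m) mod m" by simp
    also have "\<dots> = (r - 1) mod m" by (rule mod_add_self2)
    also have "\<dots> = r - 1" using assms by simp
    finally have h2: "(r + (m - 1)) mod m = r - 1" .
    have h1: "rotate r xs ! (m - 1) = xs ! ((r + (m - 1)) mod m)" by (rule nth_rotate[OF m1])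
    show ?thesis using h1 h2 by metis
  qed
  show ?thesis using a b c arc_full by auto
qed

lemma arc_eq_level: "j \<le> m \<Longrightarrow> j' \<le> m \<Longrightarrow> arc r j = arc r' j' \<Longrightarrow> j = j'"
  using card_arc by metis

lemma insert_extra_arc_eq: "insert n (arc r j) = insert n (arc r' j') \<Longrightarrow> arc r j = arc r' j'"
  using extra_notin_arc by (metis insert_ident)

definition rot_chain :: "nat \<Rightarrow> nat set list" where "rot_chain r = map (arc r) [0..<Suc m]"

lemma rot_chain_len[simp]: "length (rot_chain r) = Suc m" by (simp add: rot_chain_def)

lemma rot_chain_nth: "k \<le> m \<Longrightarrow> rot_chain r ! k = arc r k"
  unfolding rot_chain_def by (simp del: upt_Suc add: nth_map_upt)

lemma rot_chain_set: "Z \<in> set (rot_chain r) \<longleftrightarrow> (\<exists>k\<le>m. Z = arc r k)"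
  unfolding rot_chain_def by (auto simp: image_iff less_Suc_eq_le)

lemma rot_chain_ne: "rot_chain r \<noteq> []" by (simp add: rot_chain_def del: upt_Suc)

lemma rot_chain_hd: "hd (rot_chain r) = {}"
  using rot_chain_ne rot_chain_nth[of 0 r] by (simp add: hd_conv_nth)

lemma rot_chain_last: "last (rot_chain r) = set xs"
  using rot_chain_ne rot_chain_nth[of m r] by (simp add: last_conv_nth arc_full)

lemma rot_chain_distinct: "distinct (rot_chain r)"
  unfolding distinct_conv_nth
proof (intro allI impI)
  fix i j assume "i < length (rot_chain r)" "j < length (rot_chain r)" "i \<noteq> j"
  then show "rot_chain r ! i \<noteq> rot_chain r ! j"
    using rot_chain_nth card_arc by (metis rot_chain_len less_Suc_eq_le)
qed

lemma rot_chain_sub: "set (rot_chain r) \<subseteq> Pow (set xs)"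
  using rot_chain_set arc_subset by blast

lemma extra_notin_rot_chain: "Z \<in> set (rot_chain r) \<Longrightarrow> n \<notin> Z"
  using rot_chain_set extra_notin_arc by blast

lemma rot_chain_step:
  "Suc k < length (rot_chain r) \<Longrightarrow>
    \<exists>i\<in>set xs. i \<notin> rot_chain r ! k \<and> rot_chain r ! Suc k = insert i (rot_chain r ! k)"
proof -
  assume "Suc k < length (rot_chain r)"
  then have k: "k < m" by simp
  show ?thesis
    using rot_chain_nth[of k r] rot_chain_nth[of "Suc k" r] k arc_Suc[OF k, of r]
      arc_next_notin[OF k, of r] rotate_nth_in[OF k, of r] by auto
qed

lemma rot_chain_disj:
  assumes "r < m" "r' < m" "r \<noteq> r'"
  shows "set (rot_chain r) \<inter> set (rot_chain r') \<subseteq> {{}, set xs}"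
proof
  fix Z assume "Z \<in> set (rot_chain r) \<inter> set (rot_chain r')"
  then obtain k k' where k: "k \<le> m" "Z = arc r k" and k': "k' \<le> m" "Z = arc r' k'"
    using rot_chain_set by auto
  then have kk: "k = k'" using arc_eq_level by metis
  show "Z \<in> {{}, set xs}"
  proof (cases "k = 0 \<or> k = m")
    case True then show ?thesis using k arc_full by auto
  next
    case False
    then have "r = r'" using arc_determines_rotation[of r r' k] assms k k' kk by auto
    then show ?thesis using assms by simp
  qed
qed

definition detour_chain :: "nat set list" where
  "detour_chain = {} # map (\<lambda>j. insert n (arc 0 j)) [0..<Suc m] @ [set xs]"

lemma detour_chain_len [simp]: "length detour_chain = m + 3"
  by (simp add: detour_chain_def)

lemma detour_chain_nth:
  "k < m + 3 \<Longrightarrow> detour_chain ! k =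
    (if k = 0 then {} else if k \<le> m + 1 then insert n (arc 0 (k - 1)) else set xs)"
proof -
  assume k: "k < m + 3"
  show ?thesis
  proof (cases k)
    case 0 then show ?thesis by (simp add: detour_chain_def)
  next
    case (Suc k1)
    have "detour_chain ! k = (map (\<lambda>j. insert n (arc 0 j)) [0..<Suc m] @ [set xs]) ! k1"
      unfolding detour_chain_def Suc by simp
    also have "\<dots> = (if k1 \<le> m then insert n (arc 0 k1) else set xs)"
      using k Suc by (auto simp: nth_append)
    finally show ?thesis using Suc by simp
  qed
qed

lemma detour_chain_set:
  "Z \<in> set detour_chain \<longleftrightarrow> Z = {} \<or> Z = set xs \<or> (\<exists>k\<le>m. Z = insert n (arc 0 k))"
  unfolding detour_chain_def by (auto simp: image_iff less_Suc_eq_le)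

lemma detour_chain_hd: "hd detour_chain = {}" by (simp add: detour_chain_def)

lemma detour_chain_last: "last detour_chain = set xs" by (simp add: detour_chain_def)

lemma detour_chain_distinct: "0 < m \<Longrightarrow> distinct detour_chain"
proof -
  assume m: "0 < m"
  have d1: "distinct (map (\<lambda>j. insert n (arc 0 j)) [0..<Suc m])"
  proof (rule distinct_map[THEN iffD2], intro conjI)
    show "distinct [0..<Suc m]" by simp
    show "inj_on (\<lambda>j. insert n (arc 0 j)) (set [0..<Suc m])"
    proof (rule inj_onI)
      fix x y assume "x \<in> set [0..<Suc m]" "y \<in> set [0..<Suc m]"
        "insert n (arc 0 x) = insert n (arc 0 y)"
      then show "x = y"
        using insert_extra_arc_eq arc_eq_level by (metis atLeastLessThan_iff less_Suc_eq_le set_upt)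
    qed
  qed
  have "set xs \<noteq> {}" using m by auto
  moreover have "set xs \<notin> set (map (\<lambda>j. insert n (arc 0 j)) [0..<Suc m])"
    using extra_notin by auto
  ultimately show ?thesis using d1 unfolding detour_chain_def by auto
qed

lemma detour_chain_sub: "set detour_chain \<subseteq> Pow (insert n (set xs))"
  using detour_chain_set arc_subset by blast

lemma detour_chain_one: "detour_chain ! 1 = {n}"
  using detour_chain_nth[of 1] by simp

lemma rot_detour_chain_disj: "set (rot_chain r) \<inter> set detour_chain \<subseteq> {{}, set xs}"
  using extra_notin_rot_chain detour_chain_set by blast

lemma detour_chain_step_mid:
  assumes "1 \<le> k" "k \<le> m"
  shows "\<exists>i\<in>set xs. i \<notin> detour_chain ! k \<and> detour_chain ! Suc k = insert i (detour_chain ! k)"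
proof -
  have k: "k - 1 < m" using assms by simp
  have a: "detour_chain ! k = insert n (arc 0 (k - 1))" using detour_chain_nth[of k] assms by simp
  have b: "detour_chain ! Suc k = insert n (arc 0 (Suc (k - 1)))"
    using detour_chain_nth[of "Suc k"] assms by simp
  show ?thesis unfolding a b
    using arc_Suc[OF k, of 0] arc_next_notin[OF k, of 0] rotate_nth_in[OF k, of 0] extra_notin
    by auto
qed

lemma detour_chain_step0: "detour_chain ! 0 = {} \<and> detour_chain ! Suc 0 = {n}"
  using detour_chain_one by (simp add: detour_chain_def)

lemma detour_chain_step_last:
  "detour_chain ! (m + 1) = insert n (set xs) \<and> detour_chain ! Suc (m + 1) = set xs"
  using detour_chain_nth[of "m + 1"] detour_chain_nth[of "Suc (m + 1)"] arc_full by simp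

definition lifted_chain :: "nat \<Rightarrow> nat \<Rightarrow> nat set list" where
  "lifted_chain r p = map (\<lambda>j. if j \<le> p then arc r j else insert n (arc r (j - 1))) [0..<m+2]"

lemma lifted_chain_len [simp]: "length (lifted_chain r p) = m + 2"
  by (simp add: lifted_chain_def)

lemma lifted_chain_nth:
  "j < m + 2 \<Longrightarrow> lifted_chain r p ! j = (if j \<le> p then arc r j else insert n (arc r (j - 1)))"
  unfolding lifted_chain_def by (simp add: nth_map_upt)

lemma lifted_chain_set:
  assumes "p \<le> m"
  shows "Z \<in> set (lifted_chain r p) \<longleftrightarrow>
    (\<exists>j\<le>p. Z = arc r j) \<or> (\<exists>j. p \<le> j \<and> j \<le> m \<and> Z = insert n (arc r j))"
proof
  assume "Z \<in> set (lifted_chain r p)"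
  then obtain j where j: "j < m + 2" "Z = (if j \<le> p then arc r j else insert n (arc r (j - 1)))"
    unfolding lifted_chain_def by (auto simp: image_iff)
  show "(\<exists>j\<le>p. Z = arc r j) \<or> (\<exists>j. p \<le> j \<and> j \<le> m \<and> Z = insert n (arc r j))"
  proof (cases "j \<le> p")
    case True then show ?thesis using j by auto
  next
    case False then show ?thesis using j by (intro disjI2 exI[of _ "j - 1"]) auto
  qed
next
  assume "(\<exists>j\<le>p. Z = arc r j) \<or> (\<exists>j. p \<le> j \<and> j \<le> m \<and> Z = insert n (arc r j))"
  then show "Z \<in> set (lifted_chain r p)"
  proof
    assume "\<exists>j\<le>p. Z = arc r j"
    then obtain j where "j \<le> p" "Z = arc r j" by auto
    then show ?thesis unfolding lifted_chain_def using assms by (auto intro!: image_eqI[of _ _ j])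
  next
    assume "\<exists>j. p \<le> j \<and> j \<le> m \<and> Z = insert n (arc r j)"
    then obtain j where "p \<le> j" "j \<le> m" "Z = insert n (arc r j)" by auto
    then show ?thesis unfolding lifted_chain_def using assms by (auto intro!: image_eqI[of _ _ "Suc j"])
  qed
qed

lemma lifted_chain_card: "p \<le> m \<Longrightarrow> j < m + 2 \<Longrightarrow> card (lifted_chain r p ! j) = j"
  using lifted_chain_nth[of j r p] card_arc extra_notin_arc by (auto simp: card_insert_if)

lemma lifted_chain_distinct: "p \<le> m \<Longrightarrow> distinct (lifted_chain r p)"
  unfolding distinct_conv_nth using lifted_chain_card by (metis lifted_chain_len)

lemma lifted_chain_hd: "hd (lifted_chain r p) = {}"
  using lifted_chain_nth[of 0 r p] by (simp add: hd_conv_nth lifted_chain_def)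

lemma lifted_chain_last: "p \<le> m \<Longrightarrow> last (lifted_chain r p) = insert n (set xs)"
  using lifted_chain_nth[of "m + 1" r p] arc_full by (simp add: last_conv_nth lifted_chain_def)

lemma lifted_chain_ne: "lifted_chain r p \<noteq> []" by (simp add: lifted_chain_def)

lemma lifted_chain_sub: "p \<le> m \<Longrightarrow> set (lifted_chain r p) \<subseteq> Pow (insert n (set xs))"
  using lifted_chain_set arc_subset by blast

lemma lifted_chain_step:
  assumes p: "p \<le> m" and k: "Suc k < m + 2"
  shows "(\<exists>i\<in>set xs. i \<notin> lifted_chain r p ! k \<and>
            lifted_chain r p ! Suc k = insert i (lifted_chain r p ! k)) \<or>
         (k = p \<and> lifted_chain r p ! k = arc r p \<and> lifted_chain r p ! Suc k = insert n (arc r p))"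
proof -
  have a: "lifted_chain r p ! k = (if k \<le> p then arc r k else insert n (arc r (k - 1)))"
    using lifted_chain_nth k by simp
  have b: "lifted_chain r p ! Suc k = (if Suc k \<le> p then arc r (Suc k) else insert n (arc r k))"
    using lifted_chain_nth k by simp
  consider "k < p" | "k = p" | "p < k" by linarith
  then show ?thesis
  proof cases
    case 1
    then have km: "k < m" using p by simp
    show ?thesis
      using 1 a b arc_Suc[OF km, of r] arc_next_notin[OF km, of r] rotate_nth_in[OF km, of r] by auto
  next
    case 2 then show ?thesis using a b by auto
  next
    case 3
    then have km: "k - 1 < m" using k by simp
    have e: "Suc (k - 1) = k" using 3 by simp
    show ?thesis
      using 3 a b arc_Suc[OF km, of r] arc_next_notin[OF km, of r] rotate_nth_in[OF km, of r]
        extra_notin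
      unfolding e by auto
  qed
qed

lemma lifted_chain_disj:
  assumes r: "r < m" "r' < m" and p: "p \<le> m" "p' \<le> m"
    and not_both_top: "\<not> (p = m \<and> p' = m)" and not_both_bottom: "\<not> (p = 0 \<and> p' = 0)"
    and same_rot: "r = r' \<Longrightarrow> (p = 0 \<and> p' = m) \<or> (p = m \<and> p' = 0)"
  shows "set (lifted_chain r p) \<inter> set (lifted_chain r' p') \<subseteq> {{}, insert n (set xs)}"
proof
  fix Z assume Z: "Z \<in> set (lifted_chain r p) \<inter> set (lifted_chain r' p')"
  have A: "(\<exists>j\<le>p. Z = arc r j) \<or> (\<exists>j. p \<le> j \<and> j \<le> m \<and> Z = insert n (arc r j))"
    using Z lifted_chain_set[OF p(1)] by blast
  have B: "(\<exists>j\<le>p'. Z = arc r' j) \<or> (\<exists>j. p' \<le> j \<and> j \<le> m \<and> Z = insert n (arc r' j))"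
    using Z lifted_chain_set[OF p(2)] by blast
  show "Z \<in> {{}, insert n (set xs)}"
  proof (cases "n \<in> Z")
    case False
    then obtain j j' where j: "j \<le> p" "Z = arc r j" and j': "j' \<le> p'" "Z = arc r' j'"
      using A B by auto
    then have jj: "j = j'" using arc_eq_level p by (metis order_trans)
    show ?thesis
    proof (cases "j = 0")
      case True then show ?thesis using j by simp
    next
      case j0: False
      have "j \<noteq> m" using not_both_top j j' jj p by auto
      then have "j < m" using j p by simp
      then have "r = r'" using arc_determines_rotation[of r r' j] r j0 j j' jj by auto
      then show ?thesis using same_rot j j' jj j0 by auto
    qed
  next
    case True
    then obtain j j' where j: "p \<le> j" "j \<le> m" "Z = insert n (arc r j)"
      and j': "p' \<le> j'" "j' \<le> m" "Z = insert n (arc r' j')" using A B extra_notin_arc by blast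
    then have "arc r j = arc r' j'" using insert_extra_arc_eq by metis
    then have jj: "j = j'" using arc_eq_level j j' by metis
    show ?thesis
    proof (cases "j = m")
      case True then show ?thesis using j arc_full by simp
    next
      case jm: False
      have "j \<noteq> 0" using not_both_bottom j j' jj by auto
      moreover have "j < m" using jm j by simp
      ultimately have "r = r'"
        using arc_determines_rotation[of r r' j] r j j' jj \<open>arc r j = arc r' j'\<close> by auto
      then show ?thesis using same_rot j j' jj jm p by auto
    qed
  qed
qed

end

section \<open>Disjoint directed paths inside one subcube\<close>

text \<open>Every vertex of the subcube is flipset s X for a unique offset X \<subseteq> C.  By the edge
  characterisation, all edges in directions i \<in> C - {n} point from X to insert i X, while
  the n-edge at offset X points upwards iff fF of the vertex without n differs from n \<in> s.\<close>
locale hk_subcube =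
  fixes n :: nat and f :: "nat set \<Rightarrow> bool" and F v C s t :: "nat set"
  assumes n2: "2 \<le> n" and mono: "monotone_bool (n - 1) f"
    and v: "v \<subseteq> {1..n}" and C: "C \<subseteq> {1..n}"
    and src: "is_source_in (reorient F (Phi n f)) v C s"
    and snk: "is_sink_in (reorient F (Phi n f)) v C t"
begin

abbreviation "Q \<equiv> reorient F (Phi n f)"

definition fF :: "nat set \<Rightarrow> bool" where "fF X = (f X \<noteq> (n \<in> F))"

definition C' :: "nat set" where "C' = C - {n}"
definition s' :: "nat set" where "s' = s - {n}"
definition t' :: "nat set" where "t' = t - {n}"

lemma source_offset: "flipset v s \<subseteq> C"
  and source_edges: "\<forall>i\<in>C. if i = n then (n \<in> s) \<noteq> fF (s - {n}) else (i \<in> s) = (i \<in> F)"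
  using src source_reorient_Phi[OF v C n2, of F f s] unfolding fF_def by auto

lemma sink_offset: "flipset v t \<subseteq> C"
  and sink_edges: "\<forall>i\<in>C. if i = n then (n \<in> t) = fF (t - {n}) else (i \<in> t) \<noteq> (i \<in> F)"
  using snk sink_reorient_Phi[OF v C n2, of F f t] unfolding fF_def by auto

lemma source_coord: "i \<in> C' \<Longrightarrow> (i \<in> s) = (i \<in> F)"
  using source_edges unfolding C'_def by auto

lemma sink_coord: "i \<in> C' \<Longrightarrow> (i \<in> t) \<noteq> (i \<in> F)"
  using sink_edges unfolding C'_def by auto

lemma source_n: "n \<in> C \<Longrightarrow> (n \<in> s) \<noteq> fF s'"
  using source_edges unfolding s'_def by auto

lemma sink_n: "n \<in> C \<Longrightarrow> (n \<in> t) = fF t'"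
  using sink_edges unfolding t'_def by auto

lemma source_bound: "s \<subseteq> {1..n}"
  using subcube_vertex_bound source_offset v C by blast

lemma sink_bound: "t \<subseteq> {1..n}"
  using subcube_vertex_bound sink_offset v C by blast

lemma finite_C': "finite C'"
  using C finite_subset unfolding C'_def by blast

lemma n_notin_C': "n \<notin> C'"
  unfolding C'_def by simp

lemma C'_subset: "C' \<subseteq> C"
  unfolding C'_def by auto

lemma C_insert_n: "n \<in> C \<Longrightarrow> C = insert n C'"
  unfolding C'_def by auto

lemma C'_domain: "C' \<subseteq> {1..n - 1}"
  using drop_last_coordinate[OF _ n_notin_C'] C C'_subset by blast

text \<open>The sink lies at offset C' or C: all coordinates of C' differ between source and sink,
  and coordinate n differs iff n \<in> C and the n-edges at source and sink are decided by
  the same value of fF.\<close>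
lemma sink_offset_eq:
  "flipset s t = (if n \<in> C \<and> fF s' = fF t' then C else C')"
proof -
  have "flipset s t \<subseteq> C"
    using source_offset sink_offset by (auto simp: subset_iff)
  moreover have "C' \<subseteq> flipset s t"
    using source_coord sink_coord by auto
  moreover have "n \<in> flipset s t \<longleftrightarrow> n \<in> C \<and> fF s' = fF t'"
    using source_n sink_n \<open>flipset s t \<subseteq> C\<close> by auto
  ultimately show ?thesis unfolding C'_def by auto
qed

lemma offset_in_subcube: "X \<subseteq> C \<Longrightarrow> flipset s X \<in> subcube v C"
  unfolding subcube_iff
proof
  fix x assume X: "X \<subseteq> C" and x: "x \<in> flipset v (flipset s X)"
  show "x \<in> C"
  proof (rule ccontr)
    assume "x \<notin> C"
    then have "x \<notin> flipset v s" "x \<notin> X" using source_offset X by auto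
    then show False using x by simp
  qed
qed

lemma offset_bound: "X \<subseteq> C \<Longrightarrow> flipset s X \<subseteq> {1..n}"
proof
  fix x assume X: "X \<subseteq> C" and "x \<in> flipset s X"
  then have "x \<in> s \<or> x \<in> X" by auto
  then show "x \<in> {1..n}" using source_bound C X by blast
qed

lemma step_up:
  assumes X: "X \<subseteq> C" and i: "i \<in> C'" and iX: "i \<notin> X"
  shows "Q (flipset s X) (flipset s (insert i X))"
proof -
  have i1: "i \<in> {1..n}" and inn: "i \<noteq> n" using i C unfolding C'_def by auto
  have "flipset s (insert i X) = flip (flipset s X) i" using iX by auto
  then show ?thesis
    using reorient_Phi_edge[OF offset_bound[OF X] i1 n2] inn iX source_coord[OF i] by simp
qed

lemma step_n_up:
  assumes X: "X \<subseteq> C" and nX: "n \<notin> X" and up: "fF (flipset s X - {n}) \<noteq> (n \<in> s)"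
  shows "Q (flipset s X) (flipset s (insert n X))"
proof -
  have n1: "n \<in> {1..n}" using n2 by auto
  have "flipset s (insert n X) = flip (flipset s X) n" using nX by auto
  then show ?thesis
    using reorient_Phi_edge[OF offset_bound[OF X] n1 n2] nX up unfolding fF_def by auto
qed

lemma step_n_down:
  assumes X: "X \<subseteq> C" and nX: "n \<in> X" and down: "fF (flipset s X - {n}) = (n \<in> s)"
  shows "Q (flipset s X) (flipset s (X - {n}))"
proof -
  have n1: "n \<in> {1..n}" using n2 by auto
  have "flipset s (X - {n}) = flip (flipset s X) n" using nX by auto
  then show ?thesis
    using reorient_Phi_edge[OF offset_bound[OF X] n1 n2] nX down unfolding fF_def by auto
qed

definition offset_path :: "nat set list \<Rightarrow> nat set \<Rightarrow> bool" where
  "offset_path L E \<longleftrightarrow> L \<noteq> [] \<and> hd L = {} \<and> last L = E \<and> distinct L \<and> set L \<subseteq> Pow C \<and>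
     (\<forall>j. Suc j < length L \<longrightarrow> Q (flipset s (L ! j)) (flipset s (L ! Suc j)))"

lemma dipath_of_offset_path:
  assumes L: "offset_path L E" and E: "flipset s E = t"
  shows "dipath_in Q (subcube v C) (map (flipset s) L) s t"
proof -
  have "inj_on (flipset s) (set L)" by (rule inj_onI) (simp add: flipset_eq_iff)
  then show ?thesis
    using L E offset_in_subcube unfolding offset_path_def dipath_in_def
    by (auto simp: hd_map last_map distinct_map)
qed

lemma disjoint_paths_of_offset_paths:
  assumes E: "flipset s E = t"
    and paths: "\<And>k. k < card C \<Longrightarrow> offset_path (L k) E"
    and disjoint: "\<And>k l. k < card C \<Longrightarrow> l < card C \<Longrightarrow> k \<noteq> l \<Longrightarrow>
       set (L k) \<inter> set (L l) \<subseteq> {{}, E} \<and> L k \<noteq> L l"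
  shows "\<exists>P :: nat \<Rightarrow> nat set list. inj_on P {..<card C} \<and>
           (\<forall>k<card C. dipath_in Q (subcube v C) (P k) s t) \<and>
           (\<forall>k<card C. \<forall>l<card C. k \<noteq> l \<longrightarrow> (set (P k) \<inter> set (P l)) \<subseteq> {s, t})"
proof (intro exI[of _ "\<lambda>k. map (flipset s) (L k)"] conjI allI impI)
  have inj_map: "inj (map (flipset s))"
    by (rule inj_mapI) (rule injI, simp add: flipset_eq_iff)
  show "inj_on (\<lambda>k. map (flipset s) (L k)) {..<card C}"
    using disjoint inj_map by (intro inj_onI) (meson injD lessThan_iff)
  fix k assume k: "k < card C"
  show "dipath_in Q (subcube v C) (map (flipset s) (L k)) s t"
    using dipath_of_offset_path[OF paths[OF k] E] .
  fix l assume l: "l < card C" and kl: "k \<noteq> l"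
  show "set (map (flipset s) (L k)) \<inter> set (map (flipset s) (L l)) \<subseteq> {s, t}"
    using disjoint[OF k l kl] E by (auto simp: flipset_eq_iff)
qed

text \<open>An ordering of C' listing first the directions A, along which leaving the source keeps
  the value of f, then the directions B, along which arriving at the sink keeps it.\<close>
definition A :: "nat set" where "A = (if f s' then C' - F else C' \<inter> F)"
definition B :: "nat set" where "B = (if f s' then C' \<inter> F else C' - F)"
definition sig :: "nat list" where "sig = sorted_list_of_set A @ sorted_list_of_set B"

lemma AB: "A \<union> B = C'" "A \<inter> B = {}" "finite A" "finite B"
  unfolding A_def B_def using finite_C' by auto

lemma sig_distinct: "distinct sig"
  unfolding sig_def using AB by auto

lemma sig_set: "set sig = C'"
  unfolding sig_def using AB by auto

lemma n_notin_sig: "n \<notin> set sig"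
  using sig_set n_notin_C' by simp

sublocale R: cyclic_chains sig n
  by unfold_locales (rule sig_distinct, rule n_notin_sig)

lemma sig_length: "length sig = card C'"
  using distinct_card[OF sig_distinct] sig_set by simp

lemma card_C: "card C = (if n \<in> C then Suc (length sig) else length sig)"
proof (cases "n \<in> C")
  case True
  have "card (insert n C') = Suc (card C')" using finite_C' n_notin_C' by simp
  then show ?thesis using True sig_length C_insert_n[OF True] by simp
next
  case False
  then show ?thesis using sig_length unfolding C'_def by simp
qed

lemma sig_A: "k < card A \<Longrightarrow> sig ! k \<in> A"
proof -
  assume k: "k < card A"
  have "sorted_list_of_set A ! k \<in> set (sorted_list_of_set A)" using k by (intro nth_mem) simp
  then show ?thesis unfolding sig_def using AB k by (simp add: nth_append)
qed

lemma sig_B: "card A \<le> k \<Longrightarrow> k < length sig \<Longrightarrow> sig ! k \<in> B"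
proof -
  assume k: "card A \<le> k" "k < length sig"
  have "length sig = card A + card B" unfolding sig_def by simp
  then have "k - card A < length (sorted_list_of_set B)" using k AB by simp
  then have "sorted_list_of_set B ! (k - card A) \<in> set (sorted_list_of_set B)" by (rule nth_mem)
  then show ?thesis unfolding sig_def using k AB by (simp add: nth_append)
qed

lemma card_A_le: "card A \<le> length sig"
proof -
  have "A \<subseteq> C'" using AB by auto
  then show ?thesis using card_mono[OF finite_C'] sig_length by simp
qed

text \<open>Flipping an A-coordinate at the source, or a B-coordinate at the sink, does not change
  the value of f, since these directions point against the monotonicity of f there.\<close>
lemma f_flip_A: "x \<in> A \<Longrightarrow> f (flip s' x) = f s'"
proof -
  assume x: "x \<in> A"
  then have xC: "x \<in> C'" using AB by auto
  then have "x \<noteq> n" using n_notin_C' by auto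
  then have "(x \<notin> s') = f s'"
    using x source_coord[OF xC] unfolding A_def s'_def by (auto split: if_splits)
  moreover have "s' \<subseteq> {1..n - 1}"
    using drop_last_coordinate[of s' n] source_bound unfolding s'_def by auto
  moreover have "x \<in> {1..n - 1}" using C'_domain xC by blast
  ultimately show ?thesis using monotone_flip_preserves[OF mono] by blast
qed

lemma f_flip_B: "y \<in> B \<Longrightarrow> f t' = f s' \<Longrightarrow> f (flip t' y) = f t'"
proof -
  assume y: "y \<in> B" and ft: "f t' = f s'"
  then have yC: "y \<in> C'" using AB by auto
  then have "y \<noteq> n" using n_notin_C' by auto
  then have "(y \<notin> t') = f t'"
    using y ft sink_coord[OF yC] unfolding B_def t'_def by (auto split: if_splits)
  moreover have "t' \<subseteq> {1..n - 1}"
    using drop_last_coordinate[of t' n] sink_bound unfolding t'_def by auto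
  moreover have "y \<in> {1..n - 1}" using C'_domain yC by blast
  ultimately show ?thesis using monotone_flip_preserves[OF mono] by blast
qed

lemma rot_chain_offset_path: "offset_path (R.rot_chain r) C'"
  unfolding offset_path_def
proof (intro conjI allI impI)
  show "set (R.rot_chain r) \<subseteq> Pow C"
    using R.rot_chain_sub sig_set C'_subset by blast
  fix j assume j: "Suc j < length (R.rot_chain r)"
  obtain i where i: "i \<in> set sig" "i \<notin> R.rot_chain r ! j"
    "R.rot_chain r ! Suc j = insert i (R.rot_chain r ! j)"
    using R.rot_chain_step[OF j] by blast
  have "R.rot_chain r ! j \<in> set (R.rot_chain r)" using j by simp
  then have "R.rot_chain r ! j \<subseteq> C" using R.rot_chain_sub sig_set C'_subset by blast
  then show "Q (flipset s (R.rot_chain r ! j)) (flipset s (R.rot_chain r ! Suc j))"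
    unfolding i(3) using step_up i(1,2) sig_set by simp
qed (use R.rot_chain_ne R.rot_chain_hd R.rot_chain_last R.rot_chain_distinct sig_set in auto)

text \<open>Two chains of distinct rotations are distinct (their second offsets differ).\<close>
lemma rot_chains_distinct:
  assumes "k < length sig" "l < length sig" "k \<noteq> l"
  shows "set (R.rot_chain k) \<inter> set (R.rot_chain l) \<subseteq> {{}, C'} \<and> R.rot_chain k \<noteq> R.rot_chain l"
proof -
  have disj: "set (R.rot_chain k) \<inter> set (R.rot_chain l) \<subseteq> {{}, C'}"
    using R.rot_chain_disj assms sig_set by simp
  have "card (R.arc k 1) = 1" using R.card_arc assms by simp
  moreover have "card C' = length sig" using sig_length by simp
  moreover have "2 \<le> length sig" using assms by linarith
  moreover have "R.arc k 1 \<in> set (R.rot_chain k)"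
    unfolding R.rot_chain_set using assms by (intro exI[of _ 1]) auto
  ultimately have "R.rot_chain k \<noteq> R.rot_chain l" using disj by auto
  with disj show ?thesis by simp
qed

abbreviation "HK_goal \<equiv> \<exists>P :: nat \<Rightarrow> nat set list. inj_on P {..<card C} \<and>
           (\<forall>k<card C. dipath_in Q (subcube v C) (P k) s t) \<and>
           (\<forall>k<card C. \<forall>l<card C. k \<noteq> l \<longrightarrow> (set (P k) \<inter> set (P l)) \<subseteq> {s, t})"

text \<open>Case n \<notin> C: the subcube is uniformly oriented and the rotations suffice.\<close>
lemma HK_n_outside:
  assumes nC: "n \<notin> C"
  shows HK_goal
proof (rule disjoint_paths_of_offset_paths[of C' R.rot_chain])
  show "flipset s C' = t" using sink_offset_eq nC by (metis flipset_flipset)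
  show "offset_path (R.rot_chain k) C'" for k by (rule rot_chain_offset_path)
  show "set (R.rot_chain k) \<inter> set (R.rot_chain l) \<subseteq> {{}, C'} \<and> R.rot_chain k \<noteq> R.rot_chain l"
    if "k < card C" "l < card C" "k \<noteq> l" for k l
    using rot_chains_distinct that card_C nC by simp
qed

text \<open>Case n \<in> C with fF s' \<noteq> fF t': the sink lies at offset C', and the n-edges at the
  bottom and the top of the subcube point up and down respectively.  Besides the rotation
  chains we take a detour chain that crosses to the n-side first and returns at the end.\<close>
lemma detour_chain_offset_path:
  assumes nC: "n \<in> C" and flat: "fF s' \<noteq> fF t'"
  shows "offset_path R.detour_chain C'"
proof -
  have sink: "flipset s C' = t" using sink_offset_eq flat by (metis flipset_flipset)
  have m0: "0 < length sig"
  proof (rule ccontr)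
    assume "\<not> 0 < length sig"
    then have "t = s" using sink sig_set by simp
    then show False using flat unfolding s'_def t'_def by simp
  qed
  have Csig: "insert n (set sig) = C" using C_insert_n[OF nC] sig_set by simp
  have step: "Q (flipset s (R.detour_chain ! j)) (flipset s (R.detour_chain ! Suc j))"
    if j: "Suc j < length R.detour_chain" for j
  proof -
    consider "j = 0" | "1 \<le> j \<and> j \<le> length sig" | "j = length sig + 1" using j by fastforce
    then show ?thesis
    proof cases
      case 1
      have "Q (flipset s {}) (flipset s (insert n {}))"
        using step_n_up[of "{}"] source_n[OF nC] unfolding s'_def by auto
      then show ?thesis using R.detour_chain_step0 1 by simp
    next
      case 2
      then obtain i where i: "i \<in> set sig" "i \<notin> R.detour_chain ! j"
        "R.detour_chain ! Suc j = insert i (R.detour_chain ! j)"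
        using R.detour_chain_step_mid by blast
      have "R.detour_chain ! j \<in> set R.detour_chain" using j by simp
      then have "R.detour_chain ! j \<subseteq> C" using R.detour_chain_sub Csig by blast
      then show ?thesis unfolding i(3) using step_up i(1,2) sig_set by simp
    next
      case 3
      have X: "R.detour_chain ! j = C" "R.detour_chain ! Suc j = C - {n}"
        using R.detour_chain_step_last 3 Csig n_notin_sig by auto
      have "flipset s C - {n} = t'" unfolding t'_def using sink C_insert_n[OF nC] by auto
      then have "fF (flipset s C - {n}) = (n \<in> s)"
        using source_n[OF nC] sink_n[OF nC] flat by auto
      then show ?thesis unfolding X using step_n_down[of C] nC by simp
    qed
  qed
  have "R.detour_chain \<noteq> []" by (simp add: R.detour_chain_def)
  then show ?thesis unfolding offset_path_def
    using R.detour_chain_hd R.detour_chain_last R.detour_chain_distinct[OF m0]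
      R.detour_chain_sub Csig step sig_set by auto
qed

lemma rot_detour_chains_distinct:
  "set (R.rot_chain k) \<inter> set R.detour_chain \<subseteq> {{}, C'} \<and> R.rot_chain k \<noteq> R.detour_chain"
proof -
  have "R.detour_chain ! 1 \<in> set R.detour_chain" by (rule nth_mem) simp
  then have "{n} \<in> set R.detour_chain" unfolding R.detour_chain_one .
  moreover have "{n} \<notin> set (R.rot_chain k)" using R.extra_notin_rot_chain by blast
  ultimately show ?thesis using R.rot_detour_chain_disj sig_set by auto
qed

lemma HK_n_flat:
  assumes nC: "n \<in> C" and flat: "fF s' \<noteq> fF t'"
  shows HK_goal
proof -
  define L where "L k = (if k < length sig then R.rot_chain k else R.detour_chain)" for k
  have rot_first: "set (L k) \<inter> set (L l) \<subseteq> {{}, C'} \<and> L k \<noteq> L l"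
    if k: "k < length sig" and "l \<le> length sig" "k \<noteq> l" for k l
  proof (cases "l < length sig")
    case True
    then show ?thesis unfolding L_def using rot_chains_distinct[OF k True] that by simp
  next
    case False
    then show ?thesis unfolding L_def using rot_detour_chains_distinct[of k] k by simp
  qed
  have disjoint: "set (L k) \<inter> set (L l) \<subseteq> {{}, C'} \<and> L k \<noteq> L l"
    if "k \<le> length sig" "l \<le> length sig" "k \<noteq> l" for k l
  proof (cases "k < length sig")
    case True
    then show ?thesis using rot_first that by blast
  next
    case False
    then have "l < length sig" using that by auto
    then have "set (L l) \<inter> set (L k) \<subseteq> {{}, C'} \<and> L l \<noteq> L k"
      using rot_first that by blast
    then show ?thesis by (metis Int_commute)
  qed
  show ?thesis
  proof (rule disjoint_paths_of_offset_paths[of C' L])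
    show "flipset s C' = t" using sink_offset_eq flat by (metis flipset_flipset)
    show "offset_path (L k) C'" for k
      unfolding L_def using rot_chain_offset_path detour_chain_offset_path[OF nC flat] by simp
    show "set (L k) \<inter> set (L l) \<subseteq> {{}, C'} \<and> L k \<noteq> L l"
      if "k < card C" "l < card C" "k \<noteq> l" for k l
      using disjoint that card_C nC by simp
  qed
qed

text \<open>Case n \<in> C with fF s' = fF t': the sink lies at offset C, so every path crosses
  direction n exactly once.  A rotation chain may cross at level p if the n-edge at offset
  arc r p points upwards.\<close>
definition liftable :: "nat \<Rightarrow> nat \<Rightarrow> bool" where
  "liftable r p \<longleftrightarrow> fF (flipset s (R.arc r p) - {n}) \<noteq> (n \<in> s)"

lemma lifted_chain_offset_path:
  assumes nC: "n \<in> C" and p: "p \<le> length sig" and up: "liftable r p"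
  shows "offset_path (R.lifted_chain r p) C"
proof -
  have Csig: "insert n (set sig) = C" using C_insert_n[OF nC] sig_set by simp
  have "Q (flipset s (R.lifted_chain r p ! j)) (flipset s (R.lifted_chain r p ! Suc j))"
    if j: "Suc j < length (R.lifted_chain r p)" for j
  proof -
    have "R.lifted_chain r p ! j \<in> set (R.lifted_chain r p)" using j by simp
    then have X: "R.lifted_chain r p ! j \<subseteq> C" using R.lifted_chain_sub[OF p] Csig by blast
    from j have "Suc j < length sig + 2" by simp
    from R.lifted_chain_step[OF p this, of r] show ?thesis
    proof
      assume "\<exists>i\<in>set sig. i \<notin> R.lifted_chain r p ! j \<and>
        R.lifted_chain r p ! Suc j = insert i (R.lifted_chain r p ! j)"
      then show ?thesis using step_up[OF X] sig_set by auto
    next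
      assume "j = p \<and> R.lifted_chain r p ! j = R.arc r p \<and>
        R.lifted_chain r p ! Suc j = insert n (R.arc r p)"
      then show ?thesis
        using step_n_up[of "R.arc r p"] X R.extra_notin_arc up unfolding liftable_def by auto
    qed
  qed
  then show ?thesis unfolding offset_path_def
    using R.lifted_chain_ne R.lifted_chain_hd R.lifted_chain_last[OF p]
      R.lifted_chain_distinct[OF p] R.lifted_chain_sub[OF p] Csig by auto
qed

lemma sink_offset_crossing: "n \<in> C \<Longrightarrow> fF s' = fF t' \<Longrightarrow> t = flipset s C"
  using sink_offset_eq by (metis flipset_flipset)

lemma liftable_bottom: "n \<in> C \<Longrightarrow> liftable r 0"
  unfolding liftable_def using source_n unfolding s'_def by simp

lemma liftable_top:
  assumes nC: "n \<in> C" and crossing: "fF s' = fF t'"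
  shows "liftable r (length sig)"
proof -
  have "flipset s C' - {n} = t'"
    unfolding t'_def using sink_offset_crossing[OF nC crossing] C_insert_n[OF nC] n_notin_C' by auto
  then show ?thesis unfolding liftable_def using R.arc_full sig_set source_n[OF nC] crossing by simp
qed

lemma liftable_second:
  assumes nC: "n \<in> C" and k: "k < card A"
  shows "liftable k 1"
proof -
  have x: "sig ! k \<in> A" using sig_A k by simp
  then have "sig ! k \<noteq> n" using AB n_notin_C' by auto
  then have "flipset s {sig ! k} - {n} = flip s' (sig ! k)" unfolding s'_def by auto
  moreover have "R.arc k 1 = {sig ! k}" using R.arc_1 k card_A_le by simp
  ultimately show ?thesis
    unfolding liftable_def using f_flip_A[OF x] source_n[OF nC] unfolding fF_def by simp
qed

lemma liftable_penultimate:
  assumes nC: "n \<in> C" and crossing: "fF s' = fF t'"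
    and k: "0 < k" "k < length sig" "card A \<le> k - 1"
  shows "liftable k (length sig - 1)"
proof -
  define y where "y = sig ! (k - 1)"
  have y: "y \<in> B" using sig_B k unfolding y_def by simp
  then have yC: "y \<in> C'" using AB by auto
  have "flipset s (C' - {y}) - {n} = flip t' y"
    unfolding t'_def using sink_offset_crossing[OF nC crossing] C_insert_n[OF nC] yC n_notin_C'
    by auto
  moreover have "R.arc k (length sig - 1) = C' - {y}"
    using R.arc_last[of k] k sig_set unfolding y_def by simp
  moreover have "f t' = f s'" using crossing unfolding fF_def by auto
  ultimately show ?thesis
    unfolding liftable_def using f_flip_B[OF y] source_n[OF nC] crossing unfolding fF_def by simp
qed

definition r0 :: nat where "r0 = card A mod length sig"

definition lift_level :: "nat \<Rightarrow> nat" where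
  "lift_level k = (if k = r0 then 0 else if k < card A then 1 else length sig - 1)"

definition crossing_chain :: "nat \<Rightarrow> nat set list" where
  "crossing_chain k = (if k < length sig then R.lifted_chain k (lift_level k)
                       else R.lifted_chain r0 (length sig))"

lemma lift_level_range:
  assumes k: "k < length sig" and kr: "k \<noteq> r0"
  shows "0 < lift_level k \<and> lift_level k < length sig"
proof -
  have "2 \<le> length sig"
  proof (rule ccontr)
    assume "\<not> 2 \<le> length sig"
    then have "length sig = 1" "k = 0" using k by auto
    then show False using kr unfolding r0_def by simp
  qed
  then show ?thesis unfolding lift_level_def using kr by auto
qed

lemma lift_level_liftable:
  assumes nC: "n \<in> C" and crossing: "fF s' = fF t'" and k: "k < length sig"
  shows "liftable k (lift_level k)"
proof (cases "k = r0")
  case True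
  then show ?thesis unfolding lift_level_def using liftable_bottom[OF nC] by simp
next
  case False
  show ?thesis
  proof (cases "k < card A")
    case True
    then show ?thesis unfolding lift_level_def using False liftable_second[OF nC] by simp
  next
    case notA: False
    have "k \<noteq> card A" using False k unfolding r0_def by auto
    then have "card A \<le> k - 1" "0 < k" using notA by auto
    then show ?thesis
      unfolding lift_level_def using False notA liftable_penultimate[OF nC crossing _ k] by simp
  qed
qed

lemma crossing_chain_offset_path:
  assumes nC: "n \<in> C" and crossing: "fF s' = fF t'" and k: "k \<le> length sig"
  shows "offset_path (crossing_chain k) C"
proof (cases "k < length sig")
  case True
  have "lift_level k \<le> length sig" unfolding lift_level_def using True by auto
  then show ?thesis unfolding crossing_chain_def using True
    by (simp add: lifted_chain_offset_path[OF nC] lift_level_liftable[OF nC crossing True])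
next
  case False
  then show ?thesis unfolding crossing_chain_def
    using lifted_chain_offset_path[OF nC _ liftable_top[OF nC crossing]] by simp
qed

text \<open>Distinct crossing chains meet only at their ends: chains of different rotations cross
  at levels that are not both bottom and not both top, and the two chains of rotation r0
  cross at the bottom and at the top.\<close>
lemma crossing_chains_disjoint:
  assumes k: "k \<le> length sig" and l: "l \<le> length sig" and kl: "k \<noteq> l"
  shows "set (crossing_chain k) \<inter> set (crossing_chain l) \<subseteq> {{}, insert n (set sig)} \<and>
    crossing_chain k \<noteq> crossing_chain l"
proof -
  define rot where "rot i = (if i < length sig then i else r0)" for i
  define lev where "lev i = (if i < length sig then lift_level i else length sig)" for i
  have chain: "crossing_chain i = R.lifted_chain (rot i) (lev i)" for i
    unfolding crossing_chain_def rot_def lev_def by simp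
  have m0: "0 < length sig" using k l kl by linarith
  have lev_le: "lev i \<le> length sig" for i unfolding lev_def lift_level_def by auto
  have rot_lt: "rot i < length sig" for i unfolding rot_def r0_def using m0 by auto
  have lev_top: "lev i = length sig \<Longrightarrow> i = length sig" if "i \<le> length sig" for i
    using lift_level_range[of i] that unfolding lev_def lift_level_def by (auto split: if_splits)
  have lev_bottom: "lev i = 0 \<Longrightarrow> i = r0" if "i \<le> length sig" for i
    using lift_level_range[of i] that m0 unfolding lev_def by (auto split: if_splits)
  have same_rot: "(lev k = 0 \<and> lev l = length sig) \<or> (lev k = length sig \<and> lev l = 0)"
    if "rot k = rot l"
    using that k l kl unfolding rot_def lev_def lift_level_def by (auto split: if_splits)
  have "\<not> (lev k = length sig \<and> lev l = length sig)"
    using lev_top[OF k] lev_top[OF l] kl by auto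
  moreover have "\<not> (lev k = 0 \<and> lev l = 0)"
    using lev_bottom[OF k] lev_bottom[OF l] kl by auto
  ultimately have disj: "set (crossing_chain k) \<inter> set (crossing_chain l) \<subseteq> {{}, insert n (set sig)}"
    unfolding chain
    using R.lifted_chain_disj[OF rot_lt[of k] rot_lt[of l] lev_le[of k] lev_le[of l]] same_rot
    by blast
  have "crossing_chain k ! 1 \<in> set (crossing_chain k)"
    unfolding chain by (rule nth_mem) simp
  moreover have "card (crossing_chain k ! 1) = 1"
    unfolding chain using R.lifted_chain_card[OF lev_le, of 1] by simp
  moreover have "card (insert n (set sig)) = Suc (length sig)"
    using n_notin_sig distinct_card[OF sig_distinct] by simp
  ultimately have "crossing_chain k \<noteq> crossing_chain l" using disj m0 by fastforce
  with disj show ?thesis by simp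
qed

lemma HK_n_crossing:
  assumes nC: "n \<in> C" and crossing: "fF s' = fF t'"
  shows HK_goal
proof (rule disjoint_paths_of_offset_paths[of C crossing_chain])
  show "flipset s C = t" using sink_offset_crossing[OF nC crossing] by simp
  show "offset_path (crossing_chain k) C" if "k < card C" for k
    using crossing_chain_offset_path[OF nC crossing] that card_C nC by simp
  show "set (crossing_chain k) \<inter> set (crossing_chain l) \<subseteq> {{}, C} \<and>
      crossing_chain k \<noteq> crossing_chain l" if "k < card C" "l < card C" "k \<noteq> l" for k l
    using crossing_chains_disjoint that card_C nC C_insert_n[OF nC] sig_set by simp
qed

theorem holt_klee_subcube: HK_goal
  using HK_n_outside HK_n_flat HK_n_crossing by blast

end

lemma strongly_holt_klee_Phi:
  assumes n2: "2 \<le> n" and mono: "monotone_bool (n - 1) f"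
  shows "strongly_holt_klee n (Phi n f)"
  unfolding strongly_holt_klee_def holt_klee_def
proof (intro allI impI)
  fix F v C s t
  assume v: "v \<subseteq> {1..n}" and C: "C \<subseteq> {1..n}"
    and src: "is_source_in (reorient F (Phi n f)) v C s"
    and snk: "is_sink_in (reorient F (Phi n f)) v C t"
  interpret hk_subcube n f F v C s t
    using n2 mono v C src snk by unfold_locales
  show "\<exists>P :: nat \<Rightarrow> nat set list. inj_on P {..<card C} \<and>
           (\<forall>k<card C. dipath_in (reorient F (Phi n f)) (subcube v C) (P k) s t) \<and>
           (\<forall>k<card C. \<forall>l<card C. k \<noteq> l \<longrightarrow> (set (P k) \<inter> set (P l)) \<subseteq> {s, t})"
    by (rule holt_klee_subcube)
qed

theorem mainTheorem3:
  fixes n :: nat and f :: "nat set \<Rightarrow> bool"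
  assumes "n \<ge> 2" and "monotone_bool (n - 1) f"
  shows "USO n (Phi n f) \<and> acyclic_orientation (Phi n f) \<and> locally_uniform n (Phi n f)
         \<and> strongly_holt_klee n (Phi n f)
         \<and> (\<forall>g. monotone_bool (n - 1) g \<longrightarrow> (\<exists>x. x \<subseteq> {1..n-1} \<and> f x \<noteq> g x)
                 \<longrightarrow> Phi n f \<noteq> Phi n g)"
  using USO_Phi[OF assms(1)] acyclic_Phi locally_uniform_Phi[OF assms] strongly_holt_klee_Phi[OF assms]
    Phi_determines_f[OF assms(1)] by blast

end
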